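(* Fix $\varepsilon_{\mathrm{TV}}>0$, weights $\psi_k\ge0$ ($k=1,\dots,p$), and index sets $N_i\subseteq\{1,\dots,n\}\setminus\{i\}$ ($i=1,\dots,n$). For $\mathbf{K}\in\mathbb{R}_{\ge0}^{n\times p}$ set $|\nabla_{ik}\mathbf{K}|:=\sqrt{\varepsilon_{\mathrm{TV}}^2+\sum_{\ell\in N_i}(K_{ik}-K_{\ell k})^2}$ and consider the cost functional $$F(\mathbf{K}):=\mathrm{TV}(\mathbf{K}):=\sum_{k=1}^p\psi_k\sum_{i=1}^n|\nabla_{ik}\mathbf{K}|.$$ Then $$Q_{\mathrm{TV}}(\mathbf{K},\mathbf{A}):=\sum_{k=1}^p\psi_k\sum_{i=1}^n\frac{\varepsilon_{\mathrm{TV}}^2+\sum_{\ell\in N_i}\big[(K_{ik}-K_{\ell k})(A_{ik}-A_{\ell k})+(K_{\ell k}-A_{\ell k})^2+(K_{ik}-A_{ik})^2\big]}{|\nabla_{ik}\mathbf{A}|}$$ defines a separable and convex surrogate functional for $F$.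
   Context: The arguments $\mathbf{K},\mathbf{A}$ range over $n\times p$ matrices with positive entries. A map $Q_F$ is a surrogate functional for $F$ if $Q_F(\mathbf{x},\mathbf{a})\ge F(\mathbf{x})$ for all $\mathbf{x},\mathbf{a}$ and $Q_F(\mathbf{x},\mathbf{x})=F(\mathbf{x})$ for all $\mathbf{x}$. A surrogate is separable if $Q_F(\mathbf{x},\mathbf{a})=\sum_i g_i(x_i,\mathbf{a})$ for some functions $g_i$ (matrix entries playing the role of coordinates). Convexity refers to the first argument. *)

theory Defs
  imports "HOL-Analysis.Analysis"
begin

text \<open>Matrices in R^(n x p) are represented as real^'p^'n with finite index types
  'n (rows, i = 1..n) and 'p (columns, k = 1..p); entry K_ik is K$i$k.\<close>

definition pos_mats :: "(real^'p::finite^'n::finite) set" where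
  "pos_mats = {K. \<forall>i k. 0 < K$i$k}"

definition grad_norm :: "real \<Rightarrow> ('n \<Rightarrow> 'n set) \<Rightarrow> real^'p::finite^'n::finite \<Rightarrow> 'n \<Rightarrow> 'p \<Rightarrow> real" where
  "grad_norm eps N K i k = sqrt (eps^2 + (\<Sum>l\<in>N i. (K$i$k - K$l$k)^2))"

definition TV :: "real \<Rightarrow> ('p \<Rightarrow> real) \<Rightarrow> ('n \<Rightarrow> 'n set) \<Rightarrow> real^'p::finite^'n::finite \<Rightarrow> real" where
  "TV eps \<psi> N K = (\<Sum>k\<in>UNIV. \<psi> k * (\<Sum>i\<in>UNIV. grad_norm eps N K i k))"

definition Q_TV :: "real \<Rightarrow> ('p \<Rightarrow> real) \<Rightarrow> ('n \<Rightarrow> 'n set) \<Rightarrow> real^'p::finite^'n::finite \<Rightarrow> real^'p^'n \<Rightarrow> real" where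
  "Q_TV eps \<psi> N K A = (\<Sum>k\<in>UNIV. \<psi> k * (\<Sum>i\<in>UNIV.
      (eps^2 + (\<Sum>l\<in>N i. (K$i$k - K$l$k) * (A$i$k - A$l$k) + (K$l$k - A$l$k)^2 + (K$i$k - A$i$k)^2))
      / grad_norm eps N A i k))"

definition is_surrogate :: "'a set \<Rightarrow> ('a \<Rightarrow> real) \<Rightarrow> ('a \<Rightarrow> 'a \<Rightarrow> real) \<Rightarrow> bool" where
  "is_surrogate D F Q \<longleftrightarrow> (\<forall>x\<in>D. \<forall>a\<in>D. F x \<le> Q x a) \<and> (\<forall>x\<in>D. Q x x = F x)"

definition separable_mat :: "(real^'p::finite^'n::finite) set \<Rightarrow> (real^'p^'n \<Rightarrow> real^'p^'n \<Rightarrow> real) \<Rightarrow> bool" where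
  "separable_mat D Q \<longleftrightarrow> (\<exists>g :: 'n \<Rightarrow> 'p \<Rightarrow> real \<Rightarrow> real^'p^'n \<Rightarrow> real.
      \<forall>x\<in>D. \<forall>a\<in>D. Q x a = (\<Sum>i\<in>UNIV. \<Sum>k\<in>UNIV. g i k (x$i$k) a))"

definition convex_surrogate :: "'a::real_vector set \<Rightarrow> ('a \<Rightarrow> 'a \<Rightarrow> real) \<Rightarrow> bool" where
  "convex_surrogate D Q \<longleftrightarrow> (\<forall>a\<in>D. convex_on D (\<lambda>x. Q x a))"

end

theory Submission
  imports Defs
begin

text \<open>Write r = |grad_ik K|^2 and s = |grad_ik A|^2. The tangent bound
  sqrt r \<le> (r + s) / (2 sqrt s) of the concave square root at s majorises each term of TV, and
  (r + s) / 2 is at most the numerator of the corresponding term of Q_TV, because with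
  d = K_ik - K_lk, e = A_ik - A_lk, u = K_lk - A_lk, v = K_ik - A_ik one has
  2 (d e + u^2 + v^2) - d^2 - e^2 = (u + v)^2. Equality at K = A is immediate.
  Expanding the product d e, every summand of the numerator is c y + (y - b)^2 in y = K_ik
  plus a function of the same shape in K_lk; this gives separability and convexity at once.\<close>

lemma le_sum_squares_div:
  fixes a b :: real
  assumes "0 < b"
  shows "a \<le> (a\<^sup>2 + b\<^sup>2) / (2 * b)"
  using sum_squares_bound[of a b] assms by (simp add: field_simps)

lemma sum_squares_le_twice:
  fixes p q r s :: real
  shows "(p - q)\<^sup>2 + (r - s)\<^sup>2 \<le> 2 * ((p - q) * (r - s) + (q - s)\<^sup>2 + (p - r)\<^sup>2)"
proof -
  have "2 * ((p - q) * (r - s) + (q - s)\<^sup>2 + (p - r)\<^sup>2) - ((p - q)\<^sup>2 + (r - s)\<^sup>2)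
      = (p - r + q - s)\<^sup>2"
    by (simp add: power2_eq_square algebra_simps)
  then show ?thesis
    using zero_le_power2[of "p - r + q - s"] by linarith
qed

definition Q_TV_numerator ::
    "real \<Rightarrow> ('n \<Rightarrow> 'n set) \<Rightarrow> real^'p::finite^'n::finite \<Rightarrow> real^'p^'n \<Rightarrow> 'n \<Rightarrow> 'p \<Rightarrow> real"
  where
  "Q_TV_numerator eps N K A i k = eps\<^sup>2 + (\<Sum>l\<in>N i. (K$i$k - K$l$k) * (A$i$k - A$l$k)
      + (K$l$k - A$l$k)\<^sup>2 + (K$i$k - A$i$k)\<^sup>2)"

lemma Q_TV_eq:
  "Q_TV eps \<psi> N K A
    = (\<Sum>k\<in>UNIV. \<psi> k * (\<Sum>i\<in>UNIV. Q_TV_numerator eps N K A i k / grad_norm eps N A i k))"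
  by (simp add: Q_TV_def Q_TV_numerator_def)

lemma grad_norm_squared:
  "(grad_norm eps N A i k)\<^sup>2 = eps\<^sup>2 + (\<Sum>l\<in>N i. (A$i$k - A$l$k)\<^sup>2)"
  unfolding grad_norm_def by (simp add: sum_nonneg)

lemma grad_norm_pos: "eps \<noteq> 0 \<Longrightarrow> 0 < grad_norm eps N A i k"
  unfolding grad_norm_def by (simp add: add_pos_nonneg sum_nonneg)

lemma Q_TV_numerator_diag: "Q_TV_numerator eps N K K i k = (grad_norm eps N K i k)\<^sup>2"
  unfolding Q_TV_numerator_def grad_norm_squared by (simp add: power2_eq_square)

lemma sum_grad_norm_squares_le_Q_TV_numerator:
  "(grad_norm eps N K i k)\<^sup>2 + (grad_norm eps N A i k)\<^sup>2 \<le> 2 * Q_TV_numerator eps N K A i k"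
proof -
  have "(grad_norm eps N K i k)\<^sup>2 + (grad_norm eps N A i k)\<^sup>2
      = 2 * eps\<^sup>2 + (\<Sum>l\<in>N i. (K$i$k - K$l$k)\<^sup>2 + (A$i$k - A$l$k)\<^sup>2)"
    by (simp add: grad_norm_squared sum.distrib)
  also have "\<dots> \<le> 2 * eps\<^sup>2 + (\<Sum>l\<in>N i. 2 * ((K$i$k - K$l$k) * (A$i$k - A$l$k)
      + (K$l$k - A$l$k)\<^sup>2 + (K$i$k - A$i$k)\<^sup>2))"
    by (intro add_left_mono sum_mono sum_squares_le_twice)
  also have "\<dots> = 2 * Q_TV_numerator eps N K A i k"
    by (simp add: Q_TV_numerator_def sum_distrib_left)
  finally show ?thesis .
qed

lemma grad_norm_le_Q_TV_term:
  assumes "eps \<noteq> 0"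
  shows "grad_norm eps N K i k \<le> Q_TV_numerator eps N K A i k / grad_norm eps N A i k"
proof -
  have pos: "0 < grad_norm eps N A i k"
    using grad_norm_pos[OF assms] .
  then have "grad_norm eps N K i k
      \<le> ((grad_norm eps N K i k)\<^sup>2 + (grad_norm eps N A i k)\<^sup>2) / (2 * grad_norm eps N A i k)"
    by (rule le_sum_squares_div)
  also have "\<dots> \<le> Q_TV_numerator eps N K A i k / grad_norm eps N A i k"
    using pos sum_grad_norm_squares_le_Q_TV_numerator[of eps N K i k A]
    by (simp add: divide_right_mono flip: divide_divide_eq_left)
  finally show ?thesis .
qed

lemma TV_le_Q_TV:
  assumes "eps \<noteq> 0" "\<And>k. 0 \<le> \<psi> k"
  shows "TV eps \<psi> N K \<le> Q_TV eps \<psi> N K A"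
  unfolding TV_def Q_TV_eq
  by (intro sum_mono mult_left_mono assms(2) grad_norm_le_Q_TV_term assms(1))

lemma Q_TV_diag:
  assumes "eps \<noteq> 0"
  shows "Q_TV eps \<psi> N K K = TV eps \<psi> N K"
  using grad_norm_pos[OF assms] by (simp add: TV_def Q_TV_eq Q_TV_numerator_diag power2_eq_square)

definition tilted_square :: "real \<Rightarrow> real \<Rightarrow> real \<Rightarrow> real" where
  "tilted_square c b y = c * y + (y - b)\<^sup>2"

lemma convex_on_tilted_square: "convex_on UNIV (tilted_square c b)"
proof (rule convex_onI)
  fix t x y :: real
  assume "0 < t" "t < 1"
  have "(1 - t) * tilted_square c b x + t * tilted_square c b y
      - tilted_square c b ((1 - t) *\<^sub>R x + t *\<^sub>R y) = t * (1 - t) * (x - y)\<^sup>2"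
    by (simp add: tilted_square_def power2_eq_square algebra_simps)
  moreover have "0 \<le> t * (1 - t) * (x - y)\<^sup>2"
    using \<open>0 < t\<close> \<open>t < 1\<close> by simp
  ultimately show "tilted_square c b ((1 - t) *\<^sub>R x + t *\<^sub>R y)
      \<le> (1 - t) * tilted_square c b x + t * tilted_square c b y"
    by linarith
qed simp

lemma convex_on_compose_linear:
  assumes "convex_on UNIV h" "linear f" "convex S"
  shows "convex_on S (\<lambda>x. h (f x))"
proof (rule convex_onI)
  fix t :: real and x y
  assume "0 < t" "t < 1"
  then show "h (f ((1 - t) *\<^sub>R x + t *\<^sub>R y)) \<le> (1 - t) * h (f x) + t * h (f y)"
    using convex_onD[OF assms(1), of t "f x" "f y"]
    by (simp add: linear_add[OF assms(2)] linear_cmul[OF assms(2)])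
qed (fact assms(3))

lemma convex_on_mat_entry:
  assumes "convex_on UNIV h" "convex S"
  shows "convex_on S (\<lambda>x :: real^'p::finite^'n::finite. h (x $ i $ k))"
proof -
  have "linear (\<lambda>x :: real^'p^'n. x $ i $ k)"
    by (intro bounded_linear.linear bounded_linear_compose[OF bounded_linear_vec_nth]
        bounded_linear_vec_nth)
  then show ?thesis
    using convex_on_compose_linear assms by blast
qed

lemma convex_on_finite_sum:
  assumes "finite I" "convex S" "\<And>j. j \<in> I \<Longrightarrow> convex_on S (f j)"
  shows "convex_on S (\<lambda>x. \<Sum>j\<in>I. f j x)"
  using assms by (induction I rule: finite_induct) (auto simp: convex_on_const)

lemma Q_TV_numerator_split:
  "Q_TV_numerator eps N x a i k = eps\<^sup>2 + (\<Sum>l\<in>N i.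
      tilted_square (a$i$k - a$l$k) (a$i$k) (x$i$k)
      + tilted_square (a$l$k - a$i$k) (a$l$k) (x$l$k))"
  by (simp add: Q_TV_numerator_def tilted_square_def algebra_simps)

lemma convex_on_Q_TV:
  assumes "eps \<noteq> 0" "\<And>k. 0 \<le> \<psi> k" "convex S"
  shows "convex_on S (\<lambda>x. Q_TV eps \<psi> N x a)"
  unfolding Q_TV_eq Q_TV_numerator_split
  by (intro convex_on_finite_sum finite convex_on_cmul convex_on_cdiv convex_on_add
      convex_on_const[THEN iffD2] convex_on_mat_entry convex_on_tilted_square assms
      less_imp_le[OF grad_norm_pos])

lemma convex_pos_mats: "convex pos_mats"
  unfolding convex_def pos_mats_def
proof (clarsimp)
  fix x y :: "real^'p^'n" and u v :: real and i k
  assume "\<forall>i k. 0 < x$i$k" "\<forall>i k. 0 < y$i$k" "0 \<le> u" "0 \<le> v" "u + v = 1"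
  then show "0 < u * x$i$k + v * y$i$k"
    using convex_bound_lt[of "- x$i$k" 0 "- y$i$k" u v] by simp
qed

lemma separable_mat_entry:
  fixes D :: "(real^'p::finite^'n::finite) set"
  shows "separable_mat D (\<lambda>x a. f (x$i$k) a)"
  unfolding separable_mat_def
  by (intro exI[of _ "\<lambda>j m y a. if m = k then if j = i then f y a else 0 else 0"]) simp

lemma separable_mat_const: "separable_mat D (\<lambda>x a. c a)"
  using separable_mat_entry[of D "\<lambda>_ a. c a"] by simp

lemma separable_mat_add:
  assumes "separable_mat D Q" "separable_mat D R"
  shows "separable_mat D (\<lambda>x a. Q x a + R x a)"
proof -
  obtain g h where "\<forall>x\<in>D. \<forall>a\<in>D. Q x a = (\<Sum>i\<in>UNIV. \<Sum>k\<in>UNIV. g i k (x$i$k) a)"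
    and "\<forall>x\<in>D. \<forall>a\<in>D. R x a = (\<Sum>i\<in>UNIV. \<Sum>k\<in>UNIV. h i k (x$i$k) a)"
    using assms unfolding separable_mat_def by blast
  then show ?thesis
    unfolding separable_mat_def
    by (intro exI[of _ "\<lambda>i k y a. g i k y a + h i k y a"]) (simp add: sum.distrib)
qed

lemma separable_mat_mult_left:
  assumes "separable_mat D Q"
  shows "separable_mat D (\<lambda>x a. c a * Q x a)"
proof -
  obtain g where "\<forall>x\<in>D. \<forall>a\<in>D. Q x a = (\<Sum>i\<in>UNIV. \<Sum>k\<in>UNIV. g i k (x$i$k) a)"
    using assms unfolding separable_mat_def by blast
  then show ?thesis
    unfolding separable_mat_def
    by (intro exI[of _ "\<lambda>i k y a. c a * g i k y a"]) (simp add: sum_distrib_left)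
qed

lemma separable_mat_divide:
  "separable_mat D Q \<Longrightarrow> separable_mat D (\<lambda>x a. Q x a / c a)"
  using separable_mat_mult_left[of D Q "\<lambda>a. inverse (c a)"]
  by (simp add: divide_inverse mult.commute)

lemma separable_mat_sum:
  assumes "finite I" "\<And>j. j \<in> I \<Longrightarrow> separable_mat D (Q j)"
  shows "separable_mat D (\<lambda>x a. \<Sum>j\<in>I. Q j x a)"
  using assms
  by (induction I rule: finite_induct)
    (auto intro: separable_mat_add separable_mat_const[of D "\<lambda>_. 0"])

lemma separable_mat_Q_TV: "separable_mat D (Q_TV eps \<psi> N)"
  unfolding Q_TV_eq Q_TV_numerator_split
  by (intro separable_mat_sum finite separable_mat_mult_left separable_mat_divide
      separable_mat_add separable_mat_const separable_mat_entry)

theorem theorem5: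
  fixes eps :: real and \<psi> :: "'p::finite \<Rightarrow> real" and N :: "'n::finite \<Rightarrow> 'n set"
  assumes "eps > 0"
    and "\<And>k. \<psi> k \<ge> 0"
    and "\<And>i. i \<notin> N i"
  shows "is_surrogate (pos_mats :: (real^'p^'n) set) (TV eps \<psi> N) (Q_TV eps \<psi> N)
       \<and> separable_mat (pos_mats :: (real^'p^'n) set) (Q_TV eps \<psi> N)
       \<and> convex_surrogate (pos_mats :: (real^'p^'n) set) (Q_TV eps \<psi> N)"
proof -
  have "eps \<noteq> 0"
    using assms(1) by simp
  then have "is_surrogate pos_mats (TV eps \<psi> N) (Q_TV eps \<psi> N)"
    unfolding is_surrogate_def using TV_le_Q_TV Q_TV_diag assms(2) by blast
  moreover have "convex_surrogate pos_mats (Q_TV eps \<psi> N)"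
    unfolding convex_surrogate_def
    using convex_on_Q_TV \<open>eps \<noteq> 0\<close> assms(2) convex_pos_mats by blast
  ultimately show ?thesis
    using separable_mat_Q_TV by blast
qed

end
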